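(* For every positive integer $n$, \[|\mathrm{Sort}_n(\mathrm{SC}_{\underline{12}3})|=C_{n-1}+\sum_{i=0}^{n-2}2^{n-2-i}C_i,\] where $C_i=\frac{1}{i+1}\binom{2i}{i}$ is the $i$-th Catalan number.
   Context: $\mathfrak S_n$ is the set of permutations of $\{1,\dots,n\}$. A vincular pattern is a permutation with some entries underlined; a sequence contains it if it has a subsequence with the same relative order in which entries corresponding to adjacent underlined entries occupy consecutive positions. An occurrence of $\underline{12}3$ is $a_j a_{j+1} a_l$ with $l>j+1$ and $a_j<a_{j+1}<a_l$. For a pattern $\sigma$, the map $\mathrm{SC}_\sigma$ acts on $\tau$: read entries left to right; when the next entry $x$ is read, if pushing $x$ yields a stack whose entries read top to bottom (stack adjacency = consecutive positions) avoid $\sigma$, push $x$; otherwise pop the top stack entry to the output and repeat. At the end pop all remaining entries; the output is $\mathrm{SC}_\sigma(\tau)$. West's stack-sorting map is $s=\mathrm{SC}_{21}$. $\mathrm{Sort}_n(\mathrm{SC}_\sigma)=\{\tau\in\mathfrak S_n : s(\mathrm{SC}_\sigma(\tau))=12\cdots n\}$. *)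

theory Defs
  imports Main
begin

text \<open>A vincular pattern is given by a permutation p (as a list, e.g. [1,2,3]) together
 with a set A of positions i (0-based) such that the entries at positions i and i+1 of p
 are underlined together, i.e. must occupy consecutive positions in an occurrence.\<close>

definition vinc_occurs :: "nat list \<Rightarrow> nat set \<Rightarrow> 'a::linorder list \<Rightarrow> (nat \<Rightarrow> nat) \<Rightarrow> bool" where
  "vinc_occurs p A w idx \<longleftrightarrow>
     (\<forall>i<length p. idx i < length w) \<and>
     (\<forall>i j. i < j \<and> j < length p \<longrightarrow> idx i < idx j) \<and>
     (\<forall>i<length p. \<forall>j<length p. (w ! idx i < w ! idx j \<longleftrightarrow> p ! i < p ! j)) \<and>
     (\<forall>i\<in>A. Suc i < length p \<longrightarrow> idx (Suc i) = Suc (idx i))"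

definition vinc_contains :: "nat list \<Rightarrow> nat set \<Rightarrow> 'a::linorder list \<Rightarrow> bool" where
  "vinc_contains p A w \<longleftrightarrow> (\<exists>idx. vinc_occurs p A w idx)"

definition vinc_avoids :: "nat list \<Rightarrow> nat set \<Rightarrow> 'a::linorder list \<Rightarrow> bool" where
  "vinc_avoids p A w \<longleftrightarrow> \<not> vinc_contains p A w"

text \<open>Generic pattern-avoiding stack machine. Stacks are lists whose head is the top,
 so a stack read top to bottom is the list itself. Arguments: avoidance test,
 remaining input, stack, output so far.\<close>

function sc_aux :: "('a list \<Rightarrow> bool) \<Rightarrow> 'a list \<Rightarrow> 'a list \<Rightarrow> 'a list \<Rightarrow> 'a list" where
  "sc_aux ok [] st out = out @ st"
| "sc_aux ok (x # xs) st out =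
     (if st = [] \<or> ok (x # st) then sc_aux ok xs (x # st) out
      else sc_aux ok (x # xs) (tl st) (out @ [hd st]))"
  by pat_completeness auto
termination
  by (relation "measures [\<lambda>(_, xs, _, _). length xs, \<lambda>(_, _, st, _). length st]") auto

definition SC :: "nat list \<Rightarrow> nat set \<Rightarrow> 'a::linorder list \<Rightarrow> 'a list" where
  "SC p A \<tau> = sc_aux (vinc_avoids p A) \<tau> [] []"

definition west_s :: "'a::linorder list \<Rightarrow> 'a list" where
  "west_s = SC [2,1] {}"

definition perms :: "nat \<Rightarrow> nat list set" where
  "perms n = {\<tau>. distinct \<tau> \<and> set \<tau> = {1..n}}"

definition Sort_n :: "nat list \<Rightarrow> nat set \<Rightarrow> nat \<Rightarrow> nat list set" where
  "Sort_n p A n = {\<tau> \<in> perms n. west_s (SC p A \<tau>) = [1..<n+1]}"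

definition catalan :: "nat \<Rightarrow> nat" where
  "catalan i = ((2 * i) choose i) div (i + 1)"

end

theory Submission
  imports Defs "HOL-Combinatorics.Multiset_Permutations" "HOL-Computational_Algebra.Formal_Power_Series"
begin

text \<open>Write \<open>\<tau> = L n R\<close> with \<open>n\<close> maximal. Once \<open>n\<close> is pushed it is never popped, and above it the
  stack of \<open>SC\<^sub>1\<^sub>2\<^sub>-\<^sub>3\<close> behaves like that of \<open>SC\<^sub>1\<^sub>2\<close>, so \<open>SC(\<tau>) = P SC\<^sub>1\<^sub>2(R) n S\<close>, where \<open>P\<close> is
  the output and \<open>S\<close> the stack left after reading \<open>L\<close>. Since \<open>s(X n Y) = s(X) s(Y) n\<close> and the minimum
  of \<open>L\<close> is never popped, \<open>s(SC(\<tau>))\<close> is the identity iff nothing is popped while reading \<open>L\<close>,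
  \<open>s(rev L)\<close> is sorted, \<open>SC\<^sub>1\<^sub>2(R)\<close> is decreasing and \<open>R < L\<close>; so \<open>R\<close> is a permutation of
  \<open>{1..<c}\<close> and \<open>L\<close> one of \<open>{c..<n}\<close>. As \<open>SC\<^sub>1\<^sub>2(A a B) = SC\<^sub>1\<^sub>2(A) SC\<^sub>1\<^sub>2(B) a\<close> for \<open>a\<close> minimal,
  the admissible \<open>R\<close> obey Segner's recurrence; splitting \<open>L = A m B\<close> at its maximum forces \<open>B\<close> to be
  the increasing run of the smallest values, so there are \<open>2\<^sup>k\<^sup>-\<^sup>1\<close> admissible \<open>L\<close> of length \<open>k > 0\<close>.\<close>

section \<open>The patterns 12-3 and 21\<close>

definition contains_12_3 :: "'a::linorder list \<Rightarrow> bool" where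
  "contains_12_3 w \<longleftrightarrow> (\<exists>j l. Suc j < l \<and> l < length w \<and> w ! j < w ! Suc j \<and> w ! Suc j < w ! l)"

fun avoids_12_3 :: "'a::linorder list \<Rightarrow> bool" where
  "avoids_12_3 (x # y # r) \<longleftrightarrow> (x < y \<longrightarrow> (\<forall>z\<in>set r. z \<le> y)) \<and> avoids_12_3 (y # r)"
| "avoids_12_3 _ \<longleftrightarrow> True"

lemma vinc_contains_12_3_iff: "vinc_contains [1,2,3] {0} w \<longleftrightarrow> contains_12_3 w"
proof
  assume "vinc_contains [1,2,3] {0} w"
  then obtain idx where occ: "vinc_occurs [1,2,3] {0} w idx"
    unfolding vinc_contains_def by blast
  have adj: "idx 1 = Suc (idx 0)" and last: "idx 2 < length w"
    using occ unfolding vinc_occurs_def by auto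
  have "\<forall>i j. i < j \<and> j < 3 \<longrightarrow> idx i < idx j"
    using occ unfolding vinc_occurs_def by simp
  then have "idx 1 < idx 2"
    by simp
  moreover have "w ! idx i < w ! idx j \<longleftrightarrow> [1,2,3::nat] ! i < [1,2,3] ! j" if "i < 3" "j < 3" for i j
    using occ that unfolding vinc_occurs_def by auto
  then have "w ! idx 0 < w ! idx 1" "w ! idx 1 < w ! idx 2"
    by simp_all
  ultimately show "contains_12_3 w"
    unfolding contains_12_3_def using adj last by (intro exI[of _ "idx 0"] exI[of _ "idx 2"]) simp
next
  assume "contains_12_3 w"
  then obtain j l where "Suc j < l" "l < length w" "w ! j < w ! Suc j" "w ! Suc j < w ! l"
    unfolding contains_12_3_def by blast
  then have "vinc_occurs [1,2,3] {0} w (\<lambda>i. if i = 0 then j else if i = 1 then Suc j else l)"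
    unfolding vinc_occurs_def by (auto simp: numeral_3_eq_3 less_Suc_eq)
  then show "vinc_contains [1,2,3] {0} w"
    unfolding vinc_contains_def by blast
qed

lemma contains_12_3_Cons_Cons:
  "contains_12_3 (x # y # r) \<longleftrightarrow> (x < y \<and> (\<exists>z\<in>set r. y < z)) \<or> contains_12_3 (y # r)"
proof
  assume "contains_12_3 (x # y # r)"
  then obtain j l where jl: "Suc j < l" "l < length (x # y # r)"
    "(x # y # r) ! j < (x # y # r) ! Suc j" "(x # y # r) ! Suc j < (x # y # r) ! l"
    unfolding contains_12_3_def by blast
  show "(x < y \<and> (\<exists>z\<in>set r. y < z)) \<or> contains_12_3 (y # r)"
  proof (cases j)
    case 0
    then obtain l' where "l = Suc (Suc l')"
      using jl by (cases l; cases "l - 1") auto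
    then show ?thesis
      using jl 0 by (auto intro: nth_mem)
  next
    case (Suc j')
    then obtain l' where "l = Suc l'"
      using jl by (cases l) auto
    then have "contains_12_3 (y # r)"
      unfolding contains_12_3_def using jl Suc by (intro exI[of _ j'] exI[of _ l']) auto
    then show ?thesis ..
  qed
next
  assume "(x < y \<and> (\<exists>z\<in>set r. y < z)) \<or> contains_12_3 (y # r)"
  then show "contains_12_3 (x # y # r)"
  proof
    assume "x < y \<and> (\<exists>z\<in>set r. y < z)"
    then obtain k where "x < y" "k < length r" "y < r ! k"
      by (auto simp: in_set_conv_nth)
    then show ?thesis
      unfolding contains_12_3_def by (intro exI[of _ 0] exI[of _ "Suc (Suc k)"]) auto
  next
    assume "contains_12_3 (y # r)"
    then obtain j l where "Suc j < l" "l < length (y # r)"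
      "(y # r) ! j < (y # r) ! Suc j" "(y # r) ! Suc j < (y # r) ! l"
      unfolding contains_12_3_def by blast
    then show ?thesis
      unfolding contains_12_3_def by (intro exI[of _ "Suc j"] exI[of _ "Suc l"]) auto
  qed
qed

lemma avoids_12_3_iff: "avoids_12_3 w \<longleftrightarrow> \<not> contains_12_3 w"
proof (induction w rule: avoids_12_3.induct)
  case (1 x y r)
  then show ?case
    by (auto simp: contains_12_3_Cons_Cons not_less)
qed (simp_all add: contains_12_3_def)

lemma vinc_avoids_12_3_eq: "vinc_avoids [1,2,3] {0} = avoids_12_3"
  by (intro ext) (simp only: vinc_avoids_def vinc_contains_12_3_iff avoids_12_3_iff)

lemma vinc_avoids_21_eq: "vinc_avoids [2,1] {} = sorted"
proof
  fix w :: "'a list"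
  have "vinc_contains [2,1] {} w \<longleftrightarrow> (\<exists>i j. i < j \<and> j < length w \<and> w ! j < w ! i)"
  proof
    assume "vinc_contains [2,1] {} w"
    then obtain idx where "vinc_occurs [2,1] {} w idx"
      unfolding vinc_contains_def by blast
    then have "idx 0 < idx 1" "idx 1 < length w" "w ! idx 1 < w ! idx 0"
      unfolding vinc_occurs_def by auto
    then show "\<exists>i j. i < j \<and> j < length w \<and> w ! j < w ! i"
      by blast
  next
    assume "\<exists>i j. i < j \<and> j < length w \<and> w ! j < w ! i"
    then obtain i j where "i < j" "j < length w" "w ! j < w ! i"
      by blast
    then have "vinc_occurs [2,1] {} w (\<lambda>k. if k = 0 then i else j)"
      unfolding vinc_occurs_def by (auto simp: less_Suc_eq numeral_2_eq_2)
    then show "vinc_contains [2,1] {} w"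
      unfolding vinc_contains_def by blast
  qed
  then show "vinc_avoids [2,1] {} w = sorted w"
    unfolding vinc_avoids_def sorted_iff_nth_mono_less by (auto simp: not_less; meson not_le)
qed

lemma SC_12_3_eq: "SC [1,2,3] {0} w = sc_aux avoids_12_3 w [] []"
  unfolding SC_def vinc_avoids_12_3_eq ..

lemma west_s_eq: "west_s w = sc_aux sorted w [] []"
  unfolding west_s_def SC_def vinc_avoids_21_eq ..

section \<open>Runs of the stack machine\<close>

fun sc_run :: "('a list \<Rightarrow> bool) \<Rightarrow> 'a list \<Rightarrow> 'a list \<Rightarrow> 'a list \<times> 'a list" where
  "sc_run ok [] st = (st, [])"
| "sc_run ok (x # xs) st =
     (if st = [] \<or> ok (x # st) then sc_run ok xs (x # st)
      else apsnd (Cons (hd st)) (sc_run ok (x # xs) (tl st)))"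

declare sc_run.simps(2) [simp del] sc_aux.simps(2) [simp del]

lemma sc_run_push: "st = [] \<or> ok (x # st) \<Longrightarrow> sc_run ok (x # xs) st = sc_run ok xs (x # st)"
  by (simp add: sc_run.simps(2))

lemma sc_run_pop:
  "\<not> (st = [] \<or> ok (x # st)) \<Longrightarrow>
     sc_run ok (x # xs) st = apsnd (Cons (hd st)) (sc_run ok (x # xs) (tl st))"
  by (simp add: sc_run.simps(2))

lemma sc_aux_eq_sc_run: "sc_aux ok xs st out = out @ snd (sc_run ok xs st) @ fst (sc_run ok xs st)"
proof (induction ok xs st out rule: sc_aux.induct)
  case (2 ok x xs st out)
  then show ?case
    by (cases st) (auto simp: sc_aux.simps(2) sc_run.simps(2))
qed simp

lemma sc_run_append:
  "sc_run ok (xs @ ys) st =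
     apsnd ((@) (snd (sc_run ok xs st))) (sc_run ok ys (fst (sc_run ok xs st)))"
proof (induction ok xs st rule: sc_run.induct)
  case (2 ok x xs st)
  then show ?case
    by (cases "st = [] \<or> ok (x # st)") (simp_all add: sc_run_push sc_run_pop apsnd_compose)
qed (simp add: apsnd_def map_prod_def case_prod_beta)

lemma mset_sc_run:
  "mset (fst (sc_run ok xs st)) + mset (snd (sc_run ok xs st)) = mset xs + mset st"
proof (induction ok xs st rule: sc_run.induct)
  case (2 ok x xs st)
  then show ?case
    by (cases "st = [] \<or> ok (x # st)"; cases st) (auto simp: sc_run_push sc_run_pop)
qed simp

lemma set_fst_sc_run: "set (fst (sc_run ok xs st)) \<subseteq> set xs \<union> set st"
  using arg_cong[OF mset_sc_run[of ok xs st], of set_mset] by auto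

lemma mset_sc_aux: "mset (sc_aux ok xs [] []) = mset xs"
  using mset_sc_run[of ok xs "[]"] by (simp add: sc_aux_eq_sc_run add.commute)

lemma sc_run_no_pop: "snd (sc_run ok xs st) = [] \<Longrightarrow> fst (sc_run ok xs st) = rev xs @ st"
proof (induction ok xs st rule: sc_run.induct)
  case (2 ok x xs st)
  then show ?case
    by (cases "st = [] \<or> ok (x # st)") (simp_all add: sc_run_push sc_run_pop)
qed simp

text \<open>A bottom part \<open>B\<close> of the stack that is never uncovered is invisible to the run, as long as
  the test \<open>ok\<close> on stacks ending in \<open>B\<close> agrees with \<open>ok'\<close> on the part above it.\<close>

lemma sc_run_over_bottom:
  assumes "set xs \<subseteq> U" "P S"
    and "\<And>x S. x \<in> U \<Longrightarrow> P S \<Longrightarrow> ok (x # S @ B) \<longleftrightarrow> S = [] \<or> ok' (x # S)"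
    and "\<And>x S. x \<in> U \<Longrightarrow> P S \<Longrightarrow> S = [] \<or> ok' (x # S) \<Longrightarrow> P (x # S)"
    and "\<And>S. P S \<Longrightarrow> P (tl S)"
  shows "sc_run ok xs (S @ B) = apfst (\<lambda>S'. S' @ B) (sc_run ok' xs S)"
  using assms
proof (induction ok' xs S rule: sc_run.induct)
  case (1 ok' S)
  then show ?case by simp
next
  case (2 ok' x xs S)
  have x: "x \<in> U" and ok_iff: "ok (x # S @ B) \<longleftrightarrow> S = [] \<or> ok' (x # S)"
    using "2.prems"(1,2,3) by auto
  show ?case
  proof (cases "S = [] \<or> ok' (x # S)")
    case True
    then have "S @ B = [] \<or> ok (x # S @ B)"
      using ok_iff by simp
    then show ?thesis
      using "2.IH"(1)[OF True] "2.prems" x True by (simp add: sc_run_push)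
  next
    case False
    then have "\<not> (S @ B = [] \<or> ok (x # S @ B))"
      using ok_iff by simp
    then show ?thesis
      using "2.IH"(2)[OF False] "2.prems" False by (simp add: sc_run_pop apsnd_apfst_commute)
  qed
qed

lemma sc_run_flush:
  assumes "\<And>S'. S' \<noteq> [] \<Longrightarrow> set S' \<subseteq> set S \<Longrightarrow> \<not> ok (a # S')"
  shows "sc_run ok (a # xs) S = apsnd ((@) S) (sc_run ok xs [a])"
  using assms
proof (induction S)
  case Nil
  then show ?case
    by (simp add: sc_run_push apsnd_def map_prod_def case_prod_beta)
next
  case (Cons s S)
  have "\<not> ok (a # s # S)"
    using Cons.prems by auto
  moreover have "sc_run ok (a # xs) S = apsnd ((@) S) (sc_run ok xs [a])"
    using Cons.prems by (intro Cons.IH) auto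
  ultimately show ?case
    by (simp add: sc_run_pop apsnd_compose comp_def)
qed

lemma sc_aux_append_Cons:
  assumes flush: "\<And>S. S \<noteq> [] \<Longrightarrow> set S \<subseteq> set A \<Longrightarrow> \<not> ok (a # S)"
    and bottom: "\<And>x S. x \<in> set B \<Longrightarrow> set S \<subseteq> set B \<Longrightarrow> ok (x # S @ [a]) \<longleftrightarrow> S = [] \<or> ok (x # S)"
  shows "sc_aux ok (A @ a # B) [] [] = sc_aux ok A [] [] @ sc_aux ok B [] [] @ [a]"
proof -
  define S where "S = fst (sc_run ok A [])"
  have "set S \<subseteq> set A"
    using set_fst_sc_run[of ok A "[]"] by (simp add: S_def)
  then have flush_run: "sc_run ok (a # B) S = apsnd ((@) S) (sc_run ok B [a])"
    using flush by (intro sc_run_flush) auto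
  have "set (tl T) \<subseteq> set T" for T :: "'a list"
    by (cases T) auto
  then have bottom_run: "sc_run ok B ([] @ [a]) = apfst (\<lambda>S'. S' @ [a]) (sc_run ok B [])"
    by (intro sc_run_over_bottom[where U = "set B" and P = "\<lambda>S. set S \<subseteq> set B"])
      (auto simp: bottom)
  show ?thesis
    using flush_run bottom_run by (simp add: sc_aux_eq_sc_run sc_run_append S_def)
qed

section \<open>Splitting SC at its maximum and minimum\<close>

text \<open>The stack of \<open>SC\<^sub>1\<^sub>2\<close> stays weakly decreasing from the top, so avoiding 12 only requires
  comparing the two topmost entries.\<close>

fun top_ge :: "'a::linorder list \<Rightarrow> bool" where
  "top_ge (x # y # _) \<longleftrightarrow> y \<le> x"
| "top_ge _ \<longleftrightarrow> True"

definition SC_12 :: "'a::linorder list \<Rightarrow> 'a list" where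
  "SC_12 w = sc_aux top_ge w [] []"

lemma SC_12_split_at_min:
  assumes "\<forall>x\<in>set A. a < x" "\<forall>x\<in>set B. a < x"
  shows "SC_12 (A @ a # B) = SC_12 A @ SC_12 B @ [a]"
  unfolding SC_12_def
proof (rule sc_aux_append_Cons)
  show "\<not> top_ge (a # S)" if "S \<noteq> []" "set S \<subseteq> set A" for S
    using that assms(1) by (cases S) auto
  show "top_ge (x # S @ [a]) \<longleftrightarrow> S = [] \<or> top_ge (x # S)" if "x \<in> set B" for x S
    using that assms(2) by (cases S) auto
qed

lemma west_s_split_at_max:
  assumes "\<forall>x\<in>set X. x < m" "\<forall>y\<in>set Y. y < m"
  shows "west_s (X @ m # Y) = west_s X @ west_s Y @ [m]"
  unfolding west_s_eq
proof (rule sc_aux_append_Cons)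
  show "\<not> sorted (m # S)" if "S \<noteq> []" "set S \<subseteq> set X" for S
    using that assms(1) by (cases S) auto
  show "sorted (x # S @ [m]) \<longleftrightarrow> S = [] \<or> sorted (x # S)" if "x \<in> set Y" "set S \<subseteq> set Y" for x S
    using that assms(2) by (auto simp: sorted_append less_imp_le)
qed

lemma avoids_12_3_tl: "avoids_12_3 st \<Longrightarrow> avoids_12_3 (tl st)"
  by (cases st rule: avoids_12_3.cases) auto

lemma avoids_12_3_sc_run:
  fixes st :: "'a::linorder list"
  shows "avoids_12_3 st \<Longrightarrow> avoids_12_3 (fst (sc_run avoids_12_3 xs st))"
proof (induction "avoids_12_3 :: 'a list \<Rightarrow> bool" xs st rule: sc_run.induct)
  case (2 x xs st)
  then show ?case
    by (cases "st = [] \<or> avoids_12_3 (x # st)")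
      (auto simp: sc_run_push sc_run_pop avoids_12_3_tl)
qed simp

text \<open>An entry is popped only when a smaller entry arrives, so the minimum is never popped.\<close>

lemma min_in_sc_run_avoids_12_3:
  fixes z :: "'a::linorder"
  assumes "avoids_12_3 st" "z \<in> set st \<union> set xs" "\<forall>x\<in>set xs. z \<le> x"
  shows "z \<in> set (fst (sc_run avoids_12_3 xs st))"
  using assms
proof (induction "avoids_12_3 :: 'a list \<Rightarrow> bool" xs st rule: sc_run.induct)
  case (2 x xs st)
  show ?case
  proof (cases "st = [] \<or> avoids_12_3 (x # st)")
    case True
    then show ?thesis
      using 2 by (auto simp: sc_run_push)
  next
    case False
    then obtain s st' where st: "st = s # st'" and "x < s"
      using "2.prems"(1) by (cases st) auto
    then have "z \<in> set st' \<union> set (x # xs)"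
      using "2.prems"(2,3) by auto
    then show ?thesis
      using "2.hyps"(2)[OF False] "2.prems" False st avoids_12_3_tl[of st]
      by (simp add: sc_run_pop)
  qed
qed simp

lemma sc_run_avoids_12_3_split_at_max:
  fixes n :: "'a::linorder"
  assumes L: "\<forall>x\<in>set L. x < n" and R: "\<forall>x\<in>set R. x < n"
  shows "sc_run avoids_12_3 (L @ n # R) [] =
    (fst (sc_run top_ge R []) @ n # fst (sc_run avoids_12_3 L []),
     snd (sc_run avoids_12_3 L []) @ snd (sc_run top_ge R []))"
proof -
  define S where "S = fst (sc_run avoids_12_3 L [])"
  have S_less: "\<forall>x\<in>set S. x < n"
    using set_fst_sc_run[of avoids_12_3 L "[]"] L by (auto simp: S_def)
  have "avoids_12_3 S"
    using avoids_12_3_sc_run[of "[]" L] by (simp add: S_def)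
  then have "avoids_12_3 (n # S)"
    using S_less by (cases S) auto
  then have push_n: "sc_run avoids_12_3 (n # R) S = sc_run avoids_12_3 R ([] @ n # S)"
    by (simp add: sc_run_push)
  \<comment> \<open>\<open>n\<close> exceeds every entry of \<open>T\<close>, so an ascent on top of \<open>T\<close> always completes a 12-3 with \<open>n\<close>.\<close>
  have ok_iff: "avoids_12_3 (x # T @ n # S) \<longleftrightarrow> T = [] \<or> top_ge (x # T)"
    if "x < n" "set T \<subseteq> {..<n} \<and> avoids_12_3 (T @ n # S)" for x T
    using that \<open>avoids_12_3 (n # S)\<close> S_less by (cases T) (auto simp: less_imp_le not_le)
  have "sc_run avoids_12_3 R ([] @ n # S) = apfst (\<lambda>T. T @ n # S) (sc_run top_ge R [])"
  proof (rule sc_run_over_bottom[where U = "{..<n}"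
        and P = "\<lambda>T. set T \<subseteq> {..<n} \<and> avoids_12_3 (T @ n # S)"])
    show "set R \<subseteq> {..<n}" "set [] \<subseteq> {..<n} \<and> avoids_12_3 ([] @ n # S)"
      using R \<open>avoids_12_3 (n # S)\<close> by auto
  next
    fix x T
    assume "x \<in> {..<n}" "set T \<subseteq> {..<n} \<and> avoids_12_3 (T @ n # S)"
    then show "avoids_12_3 (x # T @ n # S) \<longleftrightarrow> T = [] \<or> top_ge (x # T)"
      by (intro ok_iff) auto
    assume "T = [] \<or> top_ge (x # T)"
    with \<open>x \<in> {..<n}\<close> show "set (x # T) \<subseteq> {..<n} \<and> avoids_12_3 ((x # T) @ n # S)"
      using ok_iff[of x T] \<open>set T \<subseteq> {..<n} \<and> avoids_12_3 (T @ n # S)\<close> by simp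
  next
    fix T
    assume "set T \<subseteq> {..<n} \<and> avoids_12_3 (T @ n # S)"
    then show "set (tl T) \<subseteq> {..<n} \<and> avoids_12_3 (tl T @ n # S)"
      using avoids_12_3_tl[of "T @ n # S"] by (cases T) auto
  qed
  then show ?thesis
    using push_n by (simp add: sc_run_append S_def)
qed

lemma SC_12_3_split_at_max:
  fixes n :: "'a::linorder"
  assumes "\<forall>x\<in>set L. x < n" "\<forall>x\<in>set R. x < n"
  shows "SC [1,2,3] {0} (L @ n # R) =
    snd (sc_run avoids_12_3 L []) @ SC_12 R @ n # fst (sc_run avoids_12_3 L [])"
  unfolding SC_12_3_eq SC_12_def sc_aux_eq_sc_run
  using sc_run_avoids_12_3_split_at_max[OF assms] by simp

lemma top_ge_no_pop_iff:
  fixes xs S :: "'a::linorder list"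
  shows "snd (sc_run top_ge xs S) = [] \<longleftrightarrow> sorted (take 1 S @ xs)"
proof (induction "top_ge :: 'a list \<Rightarrow> bool" xs S rule: sc_run.induct)
  case (1 S)
  then show ?case
    by (cases S) simp_all
next
  case (2 x xs S)
  show ?case
  proof (cases "S = [] \<or> top_ge (x # S)")
    case True
    then have "sorted (take 1 S @ x # xs) \<longleftrightarrow> sorted (x # xs)"
      by (cases S) auto
    then show ?thesis
      using "2.hyps"(1)[OF True] True by (simp add: sc_run_push)
  next
    case False
    then obtain s S' where "S = s # S'" "x < s"
      by (cases S rule: top_ge.cases) auto
    then show ?thesis
      using False by (simp add: sc_run_pop)
  qed
qed

lemma top_ge_no_pop_iff_sorted: "snd (sc_run top_ge xs []) = [] \<longleftrightarrow> sorted xs"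
  using top_ge_no_pop_iff[of xs "[]"] by simp

section \<open>The permutations sorted by s after SC\<close>

lemma mset_west_s: "mset (west_s w) = mset w"
  by (simp add: west_s_eq mset_sc_aux)

lemma set_west_s: "set (west_s w) = set w"
  by (metis mset_west_s set_mset_mset)

lemma mset_SC: "mset (SC p A w) = mset w"
  by (simp add: SC_def mset_sc_aux)

lemma set_SC_12: "set (SC_12 w) = set w"
  by (metis SC_12_def mset_sc_aux set_mset_mset)

lemma distinct_SC_12: "distinct (SC_12 w) \<longleftrightarrow> distinct w"
  by (metis SC_12_def mset_sc_aux mset_eq_imp_distinct_iff)

lemma west_s_decreasing: "sorted_wrt (>) w \<Longrightarrow> west_s w = rev w"
proof (induction w)
  case Nil
  then show ?case
    by (simp add: west_s_eq)
next
  case (Cons m w)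
  then have "west_s ([] @ m # w) = west_s [] @ west_s w @ [m]"
    by (intro west_s_split_at_max) auto
  then show ?case
    using Cons by (simp add: west_s_eq)
qed

lemma sorted_rev_decreasing: "sorted_wrt (>) w \<Longrightarrow> sorted (rev w)"
  by (induction w) (auto simp: sorted_append less_imp_le)

lemma sorted_west_s_split_at_max:
  assumes "\<forall>x\<in>set X. x < m" "\<forall>y\<in>set Y. y < m"
  shows "sorted (west_s (X @ m # Y)) \<longleftrightarrow>
    sorted (west_s X) \<and> sorted (west_s Y) \<and> (\<forall>x\<in>set X. \<forall>y\<in>set Y. x \<le> y)"
  using assms
  by (auto simp: west_s_split_at_max sorted_append set_west_s less_imp_le)

lemma split_list_at_max:
  fixes X :: "'a::linorder list"
  assumes "distinct X" "X \<noteq> []"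
  obtains X1 M X2 where "X = X1 @ M # X2" "\<forall>x\<in>set X1 \<union> set X2. x < M"
proof -
  define M where "M = Max (set X)"
  have "M \<in> set X"
    using assms(2) by (simp add: M_def)
  then obtain X1 X2 where X: "X = X1 @ M # X2"
    by (meson split_list)
  have "x < M" if "x \<in> set X1 \<union> set X2" for x
  proof -
    have "x \<in> set X"
      using that X by auto
    then have "x \<le> M"
      by (simp add: M_def)
    moreover have "x \<noteq> M"
      using that assms(1) X by auto
    ultimately show "x < M"
      by simp
  qed
  with X show thesis
    using that by blast
qed

lemma split_list_at_min:
  fixes X :: "'a::linorder list"
  assumes "distinct X" "X \<noteq> []"
  obtains X1 M X2 where "X = X1 @ M # X2" "\<forall>x\<in>set X1 \<union> set X2. M < x"
proof -
  define M where "M = Min (set X)"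
  have "M \<in> set X"
    using assms(2) by (simp add: M_def)
  then obtain X1 X2 where X: "X = X1 @ M # X2"
    by (meson split_list)
  have "M < x" if "x \<in> set X1 \<union> set X2" for x
  proof -
    have "x \<in> set X"
      using that X by auto
    then have "M \<le> x"
      by (simp add: M_def)
    moreover have "x \<noteq> M"
      using that assms(1) X by auto
    ultimately show "M < x"
      by simp
  qed
  with X show thesis
    using that by blast
qed

lemma sorted_west_s_snoc_min_iff:
  assumes "distinct X" "\<forall>x\<in>set X. m < x"
  shows "sorted (west_s (X @ [m])) \<longleftrightarrow> sorted_wrt (>) X"
proof
  assume "sorted_wrt (>) X"
  with assms(2) have "sorted_wrt (>) (X @ [m])"
    by (simp add: sorted_wrt_append)
  then show "sorted (west_s (X @ [m]))"
    using west_s_decreasing sorted_rev_decreasing by metis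
next
  assume "sorted (west_s (X @ [m]))"
  with assms show "sorted_wrt (>) X"
  proof (induction "length X" arbitrary: X rule: less_induct)
    case less
    show ?case
    proof (cases "X = []")
      case False
      with less.prems(1) obtain X1 M X2 where X: "X = X1 @ M # X2"
        and below_M: "\<forall>x\<in>set X1 \<union> set X2. x < M"
        by (rule split_list_at_max)
      have "m < M"
        using less.prems(2) X by simp
      then have "sorted (west_s X1) \<and> sorted (west_s (X2 @ [m])) \<and>
          (\<forall>x\<in>set X1. \<forall>y\<in>set (X2 @ [m]). x \<le> y)"
        using sorted_west_s_split_at_max[of X1 M "X2 @ [m]"] less.prems(3) below_M X
        by simp
      moreover from this have "X1 = []"
        using less.prems(2) X by (cases X1) (auto simp: not_le)
      ultimately have "sorted_wrt (>) X2"
        using less.hyps[of X2] less.prems X by simp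
      then show ?thesis
        using X below_M \<open>X1 = []\<close> by simp
    qed simp
  qed
qed

lemma sorted_west_s_SC_12_iff:
  assumes "distinct R"
  shows "sorted (west_s (SC_12 R)) \<longleftrightarrow> sorted_wrt (>) (SC_12 R)"
proof (cases "R = []")
  case False
  with assms obtain A a B where R: "R = A @ a # B" and above_a: "\<forall>x\<in>set A \<union> set B. a < x"
    by (rule split_list_at_min)
  then have SC_R: "SC_12 R = (SC_12 A @ SC_12 B) @ [a]"
    by (simp add: SC_12_split_at_min)
  have dist: "distinct (SC_12 A @ SC_12 B)" and above_a': "\<forall>x\<in>set (SC_12 A @ SC_12 B). a < x"
    using assms above_a by (auto simp: R distinct_SC_12 set_SC_12)
  show ?thesis
    unfolding SC_R sorted_west_s_snoc_min_iff[OF dist above_a'] using above_a'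
    by (simp add: sorted_wrt_append)
qed (simp add: SC_12_def west_s_eq)

text \<open>The minimum of \<open>L\<close> is kept, and it lies below every popped entry.\<close>

lemma sc_run_avoids_12_3_no_pop:
  fixes L :: "'a::linorder list"
  assumes "distinct L"
    and below: "\<forall>x\<in>set (snd (sc_run avoids_12_3 L [])). \<forall>y\<in>set (fst (sc_run avoids_12_3 L [])). x \<le> y"
  shows "snd (sc_run avoids_12_3 L []) = []"
proof (rule ccontr)
  define P S where "P = snd (sc_run avoids_12_3 L [])" and "S = fst (sc_run avoids_12_3 L [])"
  assume "snd (sc_run avoids_12_3 L []) \<noteq> []"
  then obtain t where "t \<in> set P"
    by (cases P) (auto simp: P_def)
  have mset_L: "mset (S @ P) = mset L"
    using mset_sc_run[of avoids_12_3 L "[]"] by (simp add: P_def S_def)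
  then have "set L = set S \<union> set P"
    using mset_eq_setD[OF mset_L] by simp
  then have "L \<noteq> []" "Min (set L) \<le> t"
    using \<open>t \<in> set P\<close> by auto
  then have "Min (set L) \<in> set S"
    using min_in_sc_run_avoids_12_3[of "[]" "Min (set L)" L] by (simp add: S_def)
  then have "t \<le> Min (set L)"
    using below \<open>t \<in> set P\<close> by (simp add: P_def S_def)
  then have "t = Min (set L)"
    using \<open>Min (set L) \<le> t\<close> by (rule order.antisym)
  moreover have "set S \<inter> set P = {}"
    using mset_eq_imp_distinct_iff[OF mset_L] assms(1) by simp
  ultimately show False
    using \<open>t \<in> set P\<close> \<open>Min (set L) \<in> set S\<close> by blast
qed

lemma sorted_west_s_SC_12_3_iff:
  fixes n :: "'a::linorder"
  assumes dist: "distinct (L @ n # R)" and L: "\<forall>x\<in>set L. x < n" and R: "\<forall>x\<in>set R. x < n"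
  shows "sorted (west_s (SC [1,2,3] {0} (L @ n # R))) \<longleftrightarrow>
    snd (sc_run avoids_12_3 L []) = [] \<and> sorted (west_s (rev L)) \<and>
    sorted_wrt (>) (SC_12 R) \<and> (\<forall>x\<in>set L. \<forall>y\<in>set R. y < x)"
    (is "?sorted \<longleftrightarrow> ?no_pop \<and> ?left \<and> ?right \<and> ?above")
proof -
  define P S where "P = snd (sc_run avoids_12_3 L [])" and "S = fst (sc_run avoids_12_3 L [])"
  have "set S \<union> set P = set L"
    using arg_cong[OF mset_sc_run[of avoids_12_3 L "[]"], of set_mset] by (simp add: P_def S_def)
  then have "?sorted \<longleftrightarrow> sorted (west_s (P @ SC_12 R)) \<and> sorted (west_s S) \<and>
      (\<forall>x\<in>set (P @ SC_12 R). \<forall>y\<in>set S. x \<le> y)"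
    unfolding SC_12_3_split_at_max[OF L R] P_def[symmetric] S_def[symmetric] append_assoc[symmetric]
    using L R by (intro sorted_west_s_split_at_max) (auto simp: set_SC_12)
  also have "\<dots> \<longleftrightarrow> P = [] \<and> sorted (west_s (SC_12 R)) \<and> sorted (west_s (rev L)) \<and>
      (\<forall>x\<in>set R. \<forall>y\<in>set L. x \<le> y)"
  proof (cases "P = []")
    case True
    then have "S = rev L"
      using sc_run_no_pop[of avoids_12_3 L "[]"] by (simp add: P_def S_def)
    then show ?thesis
      using True by (simp add: set_SC_12)
  next
    case False
    then show ?thesis
      using sc_run_avoids_12_3_no_pop[of L] dist by (auto simp: P_def S_def)
  qed
  also have "\<dots> \<longleftrightarrow> ?no_pop \<and> ?left \<and> ?right \<and> ?above"
    using dist by (auto simp: P_def sorted_west_s_SC_12_iff order.order_iff_strict)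
  finally show ?thesis .
qed

definition left_sortable :: "'a::linorder list \<Rightarrow> bool" where
  "left_sortable L \<longleftrightarrow> snd (sc_run avoids_12_3 L []) = [] \<and> sorted (west_s (rev L))"

definition left_parts :: "nat \<Rightarrow> nat \<Rightarrow> nat list set" where
  "left_parts a b = {L \<in> permutations_of_set {a..<b}. left_sortable L}"

definition right_parts :: "nat \<Rightarrow> nat \<Rightarrow> nat list set" where
  "right_parts a b = {R \<in> permutations_of_set {a..<b}. sorted_wrt (>) (SC_12 R)}"

lemma finite_left_parts: "finite (left_parts a b)"
  by (rule finite_subset[OF _ finite_permutations_of_set]) (auto simp: left_parts_def)

lemma finite_right_parts: "finite (right_parts a b)"
  by (rule finite_subset[OF _ finite_permutations_of_set]) (auto simp: right_parts_def)

lemma set_left_parts: "L \<in> left_parts a b \<Longrightarrow> set L = {a..<b}"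
  by (simp add: left_parts_def permutations_of_set_def)

lemma set_right_parts: "R \<in> right_parts a b \<Longrightarrow> set R = {a..<b}"
  by (simp add: right_parts_def permutations_of_set_def)

lemma length_right_parts: "R \<in> right_parts a b \<Longrightarrow> length R = b - a"
  by (auto simp: right_parts_def dest: length_finite_permutations_of_set)

lemma left_parts_empty: "b \<le> a \<Longrightarrow> left_parts a b = {[]}"
  by (auto simp: left_parts_def left_sortable_def west_s_eq)

lemma right_parts_empty: "b \<le> a \<Longrightarrow> right_parts a b = {[]}"
  by (auto simp: right_parts_def SC_12_def)

lemma Un_eq_atLeastLessThan_split:
  fixes X Y :: "nat set"
  assumes XY: "X \<union> Y = {p..<q}" and "X \<inter> Y = {}" and below: "\<forall>x\<in>X. \<forall>y\<in>Y. y < x" and "p \<le> q"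
  shows "\<exists>c\<in>{p..q}. X = {c..<q} \<and> Y = {p..<c}"
proof (cases "X = {}")
  case True
  then show ?thesis
    using assms by (intro bexI[of _ q]) auto
next
  case False
  define c where "c = Min X"
  have "finite X"
    using XY by (metis finite_Un finite_atLeastLessThan)
  then have "c \<in> X" "\<forall>x\<in>X. c \<le> x"
    using False by (simp_all add: c_def)
  then have "c \<in> {p..<q}"
    using XY by blast
  then have "c \<in> {p..q}"
    by simp
  have "X = {c..<q}"
  proof (intro set_eqI iffI)
    fix x
    assume "x \<in> X"
    then show "x \<in> {c..<q}"
      using XY \<open>\<forall>x\<in>X. c \<le> x\<close> by auto
  next
    fix x
    assume "x \<in> {c..<q}"
    then have "x \<in> X \<union> Y" and "\<not> x < c"
      using XY \<open>c \<in> {p..q}\<close> by auto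
    then show "x \<in> X"
      using below \<open>c \<in> X\<close> by blast
  qed
  moreover have "Y = {p..<q} - X"
    using XY \<open>X \<inter> Y = {}\<close> by auto
  ultimately show ?thesis
    using \<open>c \<in> {p..q}\<close> by auto
qed

lemma append_Cons_permutations_of_interval_iff:
  fixes m :: nat
  assumes "m \<notin> {p..<q}" "p \<le> q"
  shows "A @ m # B \<in> permutations_of_set (insert m {p..<q}) \<and> (\<forall>x\<in>set A. \<forall>y\<in>set B. y < x) \<longleftrightarrow>
    (\<exists>c\<in>{p..q}. A \<in> permutations_of_set {c..<q} \<and> B \<in> permutations_of_set {p..<c})"
proof
  assume "A @ m # B \<in> permutations_of_set (insert m {p..<q}) \<and> (\<forall>x\<in>set A. \<forall>y\<in>set B. y < x)"
  then have "distinct (A @ m # B)" "set A \<union> set B = {p..<q}" "\<forall>x\<in>set A. \<forall>y\<in>set B. y < x"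
    using assms by (auto simp: permutations_of_set_def)
  then show "\<exists>c\<in>{p..q}. A \<in> permutations_of_set {c..<q} \<and> B \<in> permutations_of_set {p..<c}"
    using Un_eq_atLeastLessThan_split[of "set A" "set B" p q] \<open>p \<le> q\<close>
    by (auto simp: permutations_of_set_def)
next
  assume "\<exists>c\<in>{p..q}. A \<in> permutations_of_set {c..<q} \<and> B \<in> permutations_of_set {p..<c}"
  then show "A @ m # B \<in> permutations_of_set (insert m {p..<q}) \<and> (\<forall>x\<in>set A. \<forall>y\<in>set B. y < x)"
    using assms by (auto simp: permutations_of_set_def)
qed

lemma set_eq_UN_append_Cons:
  assumes "\<And>xs. xs \<in> S \<Longrightarrow> m \<in> set xs"
    and "\<And>A B. A @ m # B \<in> S \<longleftrightarrow> (\<exists>c\<in>I. A \<in> X c \<and> B \<in> Y c)"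
  shows "S = (\<Union>c\<in>I. (\<lambda>(A, B). A @ m # B) ` (X c \<times> Y c))"
proof (intro set_eqI iffI)
  fix xs
  assume "xs \<in> S"
  then obtain A B where xs: "xs = A @ m # B"
    using assms(1) by (meson split_list)
  then obtain c where "c \<in> I" "(A, B) \<in> X c \<times> Y c"
    using assms(2) \<open>xs \<in> S\<close> by auto
  then show "xs \<in> (\<Union>c\<in>I. (\<lambda>(A, B). A @ m # B) ` (X c \<times> Y c))"
    unfolding xs by (intro UN_I[of c] rev_image_eqI[of "(A, B)"]) simp_all
qed (use assms(2) in auto)

lemma Sort_n_iff: "\<tau> \<in> Sort_n p A n \<longleftrightarrow> \<tau> \<in> perms n \<and> sorted (west_s (SC p A \<tau>))"
proof -
  have "west_s (SC p A \<tau>) = [1..<n+1] \<longleftrightarrow> sorted (west_s (SC p A \<tau>))" if "\<tau> \<in> perms n"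
  proof
    have mset_eq: "mset (west_s (SC p A \<tau>)) = mset \<tau>"
      by (simp add: mset_west_s mset_SC)
    have "distinct \<tau>" "set \<tau> = {1..n}"
      using that by (simp_all add: perms_def)
    then have "distinct (west_s (SC p A \<tau>))" "set (west_s (SC p A \<tau>)) = set [1..<n+1]"
      using mset_eq_imp_distinct_iff[OF mset_eq] mset_eq_setD[OF mset_eq] by (auto simp del: upt_Suc)
    moreover assume "sorted (west_s (SC p A \<tau>))"
    ultimately show "west_s (SC p A \<tau>) = [1..<n+1]"
      using sorted_distinct_set_unique[OF _ _ sorted_upt distinct_upt] by blast
  qed (metis sorted_upt)
  then show ?thesis
    unfolding Sort_n_def by blast
qed

lemma perms_eq: "1 \<le> n \<Longrightarrow> perms n = permutations_of_set (insert n {1..<n})"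
proof -
  assume "1 \<le> n"
  then have "insert n {1..<n} = {1..n}"
    by (auto simp del: One_nat_def)
  then show ?thesis
    unfolding perms_def permutations_of_set_def by (simp only: conj_commute)
qed

lemma append_Cons_in_Sort_n_12_3_iff:
  assumes "n \<ge> 1"
  shows "L @ n # R \<in> Sort_n [1,2,3] {0} n \<longleftrightarrow> (\<exists>c\<in>{1..n}. L \<in> left_parts c n \<and> R \<in> right_parts 1 c)"
proof -
  have "L @ n # R \<in> Sort_n [1,2,3] {0} n \<longleftrightarrow>
      L @ n # R \<in> permutations_of_set (insert n {1..<n}) \<and> (\<forall>x\<in>set L. \<forall>y\<in>set R. y < x) \<and>
      left_sortable L \<and> sorted_wrt (>) (SC_12 R)"
  proof (cases "L @ n # R \<in> permutations_of_set (insert n {1..<n})")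
    case True
    then have dist: "distinct (L @ n # R)" and below: "\<forall>x\<in>set L. x < n" "\<forall>x\<in>set R. x < n"
      by (auto simp: permutations_of_set_def)
    with True show ?thesis
      unfolding Sort_n_iff perms_eq[OF assms] sorted_west_s_SC_12_3_iff[OF dist below] left_sortable_def
      by blast
  qed (simp add: Sort_n_iff perms_eq[OF assms])
  also have "\<dots> \<longleftrightarrow> (\<exists>c\<in>{1..n}. L \<in> permutations_of_set {c..<n} \<and> R \<in> permutations_of_set {1..<c}) \<and>
      left_sortable L \<and> sorted_wrt (>) (SC_12 R)"
    using append_Cons_permutations_of_interval_iff[of n 1 n L R] assms by auto
  also have "\<dots> \<longleftrightarrow> (\<exists>c\<in>{1..n}. L \<in> left_parts c n \<and> R \<in> right_parts 1 c)"
    by (auto simp: left_parts_def right_parts_def)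
  finally show ?thesis .
qed

lemma Sort_n_12_3_eq:
  assumes "n \<ge> 1"
  shows "Sort_n [1,2,3] {0} n = (\<Union>c\<in>{1..n}. (\<lambda>(L, R). L @ n # R) ` (left_parts c n \<times> right_parts 1 c))"
proof (rule set_eq_UN_append_Cons)
  show "n \<in> set \<tau>" if "\<tau> \<in> Sort_n [1,2,3] {0} n" for \<tau>
    using that assms by (simp add: Sort_n_iff perms_def)
qed (rule append_Cons_in_Sort_n_12_3_iff[OF assms])

section \<open>Catalan numbers\<close>

lemma catalan_mult_Suc: "catalan n * Suc n = (2 * n) choose n"
proof -
  have "Suc n * (2 * n choose Suc n) = 2 * n * (2 * n - 1 choose n)"
    by (rule binomial_absorption)
  also have "\<dots> = (2 * n - n) * (2 * n choose n)"
    by (rule binomial_absorb_comp[symmetric])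
  finally have "(2 * n choose n) = Suc n * ((2 * n choose n) - (2 * n choose Suc n))"
    by (simp add: diff_mult_distrib2)
  then show ?thesis
    unfolding catalan_def by (metis Suc_eq_plus1 nonzero_mult_div_cancel_left mult.commute nat.distinct(1))
qed

lemma catalan_mult_fact: "catalan n * (fact n * fact (Suc n)) = (fact (2 * n) :: nat)"
proof -
  have "catalan n * (fact n * fact (Suc n)) = fact n * fact (2 * n - n) * (catalan n * Suc n)"
    by (simp add: fact_Suc mult_2 algebra_simps)
  also have "\<dots> = fact (2 * n)"
    unfolding catalan_mult_Suc by (rule binomial_fact_lemma) simp
  finally show ?thesis .
qed

lemma catalan_Suc_ratio: "Suc (Suc n) * catalan (Suc n) = 2 * (2 * n + 1) * catalan n"
proof -
  have "Suc n * (fact n * fact (Suc n)) * (Suc (Suc n) * catalan (Suc n)) =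
      catalan (Suc n) * (fact (Suc n) * fact (Suc (Suc n)))"
    by (simp add: fact_Suc algebra_simps)
  also have "\<dots> = fact (2 * Suc n)"
    by (rule catalan_mult_fact)
  also have "\<dots> = (2 * n + 2) * (2 * n + 1) * (catalan n * (fact n * fact (Suc n)))"
    unfolding catalan_mult_fact by (simp add: fact_Suc algebra_simps)
  also have "\<dots> = Suc n * (fact n * fact (Suc n)) * (2 * (2 * n + 1) * catalan n)"
    by (simp add: algebra_simps)
  finally show ?thesis
    by simp
qed

lemma half_gchoose_Suc: "((1/2 :: real) gchoose Suc n) * (-4) ^ Suc n = - 2 * real (catalan n)"
proof (induction n)
  case 0
  then show ?case
    by (simp add: catalan_def)
next
  case (Suc n)
  have step: "real (Suc k) * (((1/2 :: real) gchoose Suc k) * (-4) ^ Suc k) =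
      (4 * real k - 2) * (((1/2) gchoose k) * (-4) ^ k)" for k
  proof -
    have absorb: "real (Suc k) * ((1/2 :: real) gchoose Suc k) = (1/2 - real k) * ((1/2) gchoose k)"
      using gbinomial_mult_1[of "1/2 :: real" k] by (simp add: algebra_simps)
    have "real (Suc k) * (((1/2 :: real) gchoose Suc k) * (-4) ^ Suc k) =
        - 4 * (-4) ^ k * (real (Suc k) * ((1/2) gchoose Suc k))"
      by (simp add: algebra_simps)
    also have "\<dots> = (4 * real k - 2) * (((1/2) gchoose k) * (-4) ^ k)"
      unfolding absorb by (simp add: algebra_simps)
    finally show ?thesis .
  qed
  have ratio: "real (Suc (Suc n)) * real (catalan (Suc n)) = (4 * real n + 2) * real (catalan n)"
    using arg_cong[OF catalan_Suc_ratio[of n], of real] by (simp add: algebra_simps)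
  have "real (Suc (Suc n)) * (((1/2 :: real) gchoose Suc (Suc n)) * (-4) ^ Suc (Suc n)) =
      (4 * real (Suc n) - 2) * (((1/2) gchoose Suc n) * (-4) ^ Suc n)"
    by (rule step)
  also have "\<dots> = - 2 * ((4 * real n + 2) * real (catalan n))"
    unfolding Suc.IH by simp
  also have "\<dots> = real (Suc (Suc n)) * (- 2 * real (catalan (Suc n)))"
    unfolding ratio[symmetric] by simp
  finally show ?case
    by (simp only: mult_left_cancel[OF of_nat_neq_0])
qed

text \<open>Segner's recurrence, from Vandermonde's identity for the exponents 1/2 + 1/2 = 1.\<close>

lemma catalan_Suc: "catalan (Suc n) = (\<Sum>i\<le>n. catalan i * catalan (n - i))"
proof -
  define h where "h k = ((1/2 :: real) gchoose k) * (-4) ^ k" for k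
  have h_Suc: "h (Suc i) = - 2 * real (catalan i)" for i
    unfolding h_def by (rule half_gchoose_Suc)
  have "(\<Sum>k\<le>Suc (Suc n). h k * h (Suc (Suc n) - k)) =
      (\<Sum>k\<le>Suc (Suc n). ((1/2) gchoose k) * ((1/2) gchoose (Suc (Suc n) - k))) * (-4) ^ Suc (Suc n)"
    unfolding sum_distrib_right
  proof (rule sum.cong)
    fix k
    assume "k \<in> {..Suc (Suc n)}"
    then have "(-4 :: real) ^ k * (-4) ^ (Suc (Suc n) - k) = (-4) ^ Suc (Suc n)"
      by (simp flip: power_add)
    then show "h k * h (Suc (Suc n) - k) =
        ((1/2) gchoose k) * ((1/2) gchoose (Suc (Suc n) - k)) * (-4) ^ Suc (Suc n)"
      unfolding h_def \<open>_ = (-4) ^ Suc (Suc n)\<close>[symmetric] by (simp only: mult_ac)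
  qed simp
  also have "\<dots> = (1 gchoose Suc (Suc n)) * (-4) ^ Suc (Suc n)"
    using gbinomial_Vandermonde[of "1/2 :: real" "1/2" "Suc (Suc n)"] by (simp add: atLeast0AtMost)
  also have "(1 :: real) gchoose Suc (Suc n) = 0"
    using binomial_gbinomial[of 1 "Suc (Suc n)", where 'a = real] by simp
  finally have "(\<Sum>k\<le>Suc (Suc n). h k * h (Suc (Suc n) - k)) = 0"
    by simp
  moreover have "(\<Sum>k\<le>Suc (Suc n). h k * h (Suc (Suc n) - k)) =
      h 0 * h (Suc (Suc n)) + (\<Sum>i\<le>n. h (Suc i) * h (Suc (n - i))) + h (Suc (Suc n)) * h 0"
    by (subst sum.atMost_Suc_shift, subst sum.atMost_Suc) (simp add: Suc_diff_le)
  moreover have "h 0 = 1"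
    by (simp add: h_def)
  ultimately have "4 * (\<Sum>i\<le>n. real (catalan i) * real (catalan (n - i))) - 4 * real (catalan (Suc n)) = 0"
    by (simp add: h_Suc sum_distrib_left)
  then have "real (catalan (Suc n)) = real (\<Sum>i\<le>n. catalan i * catalan (n - i))"
    by simp
  then show ?thesis
    by (simp only: of_nat_eq_iff)
qed

lemma catalan_Suc_interval:
  assumes "a < b"
  shows "(\<Sum>c\<in>{Suc a..b}. catalan (b - c) * catalan (c - Suc a)) = catalan (b - a)"
proof -
  define k where "k = b - a - 1"
  then have k: "b - a = Suc k"
    using assms by simp
  have "{Suc a..b} = {0 + Suc a..k + Suc a}"
    using k by simp
  then have "(\<Sum>c\<in>{Suc a..b}. catalan (b - c) * catalan (c - Suc a)) =
      (\<Sum>i=0..k. catalan (b - (i + Suc a)) * catalan i)"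
    by (simp only: sum.shift_bounds_cl_nat_ivl add_diff_cancel_right')
  also have "\<dots> = (\<Sum>i\<le>k. catalan i * catalan (k - i))"
  proof (rule sum.cong)
    fix i
    assume "i \<in> {..k}"
    then have "b - (i + Suc a) = k - i"
      using k by arith
    then show "catalan (b - (i + Suc a)) * catalan i = catalan i * catalan (k - i)"
      by simp
  qed (simp add: atLeast0AtMost)
  also have "\<dots> = catalan (b - a)"
    unfolding k catalan_Suc ..
  finally show ?thesis .
qed

section \<open>Counting\<close>

lemma left_sortable_split_at_max:
  fixes m :: "'a::linorder"
  assumes "distinct (A @ m # B)" and A: "\<forall>x\<in>set A. x < m" and B: "\<forall>x\<in>set B. x < m"
  shows "left_sortable (A @ m # B) \<longleftrightarrow> left_sortable A \<and> sorted B \<and> (\<forall>x\<in>set A. \<forall>y\<in>set B. y < x)"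
proof -
  have "sorted B \<Longrightarrow> sorted (west_s (rev B))"
    using assms(1) by (simp add: west_s_decreasing strict_sorted_iff sorted_wrt_rev)
  moreover have "sorted (west_s (rev (A @ m # B))) \<longleftrightarrow>
      sorted (west_s (rev B)) \<and> sorted (west_s (rev A)) \<and> (\<forall>y\<in>set B. \<forall>x\<in>set A. y \<le> x)"
    using A B by (simp add: sorted_west_s_split_at_max)
  moreover have "(\<forall>y\<in>set B. \<forall>x\<in>set A. y \<le> x) \<longleftrightarrow> (\<forall>x\<in>set A. \<forall>y\<in>set B. y < x)"
    using assms(1) by (fastforce simp: order.order_iff_strict)
  ultimately show ?thesis
    unfolding left_sortable_def sc_run_avoids_12_3_split_at_max[OF A B]
    by (auto simp: top_ge_no_pop_iff_sorted)
qed

lemma sorted_permutations_of_interval_iff: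
  "B \<in> permutations_of_set {a..<c} \<and> sorted B \<longleftrightarrow> B = [a..<c]"
proof
  assume "B \<in> permutations_of_set {a..<c} \<and> sorted B"
  then show "B = [a..<c]"
    by (intro sorted_distinct_set_unique) (auto simp: permutations_of_set_def)
qed (simp add: permutations_of_set_def)

lemma append_Cons_in_left_parts_iff:
  assumes "a \<le> m"
  shows "A @ m # B \<in> left_parts a (Suc m) \<longleftrightarrow> (\<exists>c\<in>{a..m}. A \<in> left_parts c m \<and> B \<in> {[a..<c]})"
proof -
  have "A @ m # B \<in> left_parts a (Suc m) \<longleftrightarrow>
      A @ m # B \<in> permutations_of_set (insert m {a..<m}) \<and> (\<forall>x\<in>set A. \<forall>y\<in>set B. y < x) \<and>
      left_sortable A \<and> sorted B"
  proof (cases "A @ m # B \<in> permutations_of_set (insert m {a..<m})")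
    case True
    then have "distinct (A @ m # B)" "\<forall>x\<in>set A. x < m" "\<forall>x\<in>set B. x < m"
      by (auto simp: permutations_of_set_def)
    with True show ?thesis
      using assms by (auto simp: left_parts_def atLeastLessThanSuc left_sortable_split_at_max)
  qed (use assms in \<open>simp add: left_parts_def atLeastLessThanSuc\<close>)
  also have "\<dots> \<longleftrightarrow> (\<exists>c\<in>{a..m}. A \<in> permutations_of_set {c..<m} \<and> B \<in> permutations_of_set {a..<c}) \<and>
      left_sortable A \<and> sorted B"
    using append_Cons_permutations_of_interval_iff[of m a m A B] assms by auto
  also have "\<dots> \<longleftrightarrow> (\<exists>c\<in>{a..m}. A \<in> left_parts c m \<and> B \<in> {[a..<c]})"
    using sorted_permutations_of_interval_iff[of B a] by (auto simp: left_parts_def)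
  finally show ?thesis .
qed

lemma left_parts_Suc:
  assumes "a \<le> m"
  shows "left_parts a (Suc m) = (\<Union>c\<in>{a..m}. (\<lambda>(A, B). A @ m # B) ` (left_parts c m \<times> {[a..<c]}))"
proof (rule set_eq_UN_append_Cons)
  show "m \<in> set L" if "L \<in> left_parts a (Suc m)" for L
    using that assms by (auto simp: left_parts_def permutations_of_set_def)
qed (rule append_Cons_in_left_parts_iff[OF assms])

lemma append_Cons_in_right_parts_iff:
  assumes "a < b"
  shows "A @ a # B \<in> right_parts a b \<longleftrightarrow>
    (\<exists>c\<in>{Suc a..b}. A \<in> right_parts c b \<and> B \<in> right_parts (Suc a) c)"
proof -
  have ivl: "{a..<b} = insert a {Suc a..<b}"
    using assms by auto
  have "A @ a # B \<in> right_parts a b \<longleftrightarrow>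
      A @ a # B \<in> permutations_of_set (insert a {Suc a..<b}) \<and> (\<forall>x\<in>set A. \<forall>y\<in>set B. y < x) \<and>
      sorted_wrt (>) (SC_12 A) \<and> sorted_wrt (>) (SC_12 B)"
  proof (cases "A @ a # B \<in> permutations_of_set (insert a {Suc a..<b})")
    case True
    then have "\<forall>x\<in>set A. a < x" "\<forall>x\<in>set B. a < x"
      by (auto simp: permutations_of_set_def)
    with True show ?thesis
      by (auto simp: right_parts_def ivl SC_12_split_at_min sorted_wrt_append set_SC_12)
  qed (simp add: right_parts_def ivl)
  also have "\<dots> \<longleftrightarrow> (\<exists>c\<in>{Suc a..b}. A \<in> permutations_of_set {c..<b} \<and> B \<in> permutations_of_set {Suc a..<c}) \<and>
      sorted_wrt (>) (SC_12 A) \<and> sorted_wrt (>) (SC_12 B)"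
    using append_Cons_permutations_of_interval_iff[of a "Suc a" b A B] assms by auto
  also have "\<dots> \<longleftrightarrow> (\<exists>c\<in>{Suc a..b}. A \<in> right_parts c b \<and> B \<in> right_parts (Suc a) c)"
    by (auto simp: right_parts_def)
  finally show ?thesis .
qed

lemma right_parts_Suc:
  assumes "a < b"
  shows "right_parts a b =
    (\<Union>c\<in>{Suc a..b}. (\<lambda>(A, B). A @ a # B) ` (right_parts c b \<times> right_parts (Suc a) c))"
proof (rule set_eq_UN_append_Cons)
  show "a \<in> set R" if "R \<in> right_parts a b" for R
    using that assms by (auto simp: right_parts_def permutations_of_set_def)
qed (rule append_Cons_in_right_parts_iff[OF assms])

lemma card_UN_append_Cons:
  assumes "finite I" "\<And>c. c \<in> I \<Longrightarrow> finite (X c)" "\<And>c. c \<in> I \<Longrightarrow> finite (Y c)"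
    and notin: "\<And>c xs ys. c \<in> I \<Longrightarrow> xs \<in> X c \<Longrightarrow> ys \<in> Y c \<Longrightarrow> m \<notin> set xs \<and> m \<notin> set ys"
    and index: "\<And>c ys. c \<in> I \<Longrightarrow> ys \<in> Y c \<Longrightarrow> c = p + length ys"
  shows "card (\<Union>c\<in>I. (\<lambda>(xs, ys). xs @ m # ys) ` (X c \<times> Y c)) = (\<Sum>c\<in>I. card (X c) * card (Y c))"
proof -
  define F where "F = (\<lambda>(c :: nat, xs, ys). xs @ m # ys)"
  have "(\<Union>c\<in>I. (\<lambda>(xs, ys). xs @ m # ys) ` (X c \<times> Y c)) = F ` (SIGMA c:I. X c \<times> Y c)"
    unfolding F_def by (auto simp: image_iff; blast)
  moreover have "inj_on F (SIGMA c:I. X c \<times> Y c)"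
  proof (rule inj_onI, clarsimp simp: F_def)
    fix c xs ys c' xs' ys'
    assume "c \<in> I" "xs \<in> X c" "ys \<in> Y c" "c' \<in> I" "ys' \<in> Y c'" and eq: "xs @ m # ys = xs' @ m # ys'"
    then have "xs = xs' \<and> ys = ys'"
      using notin[of c xs ys] append_Cons_eq_iff[of m xs ys xs' ys'] by simp
    then show "c = c' \<and> xs = xs' \<and> ys = ys'"
      using index[of c ys] index[of c' ys'] \<open>c \<in> I\<close> \<open>c' \<in> I\<close> \<open>ys \<in> Y c\<close> \<open>ys' \<in> Y c'\<close> by simp
  qed
  ultimately show ?thesis
    using assms(1-3) by (simp add: card_image card_SigmaI card_cartesian_product)
qed

lemma sum_pow2_interval:
  "a \<le> m \<Longrightarrow> (\<Sum>c=a..m. if m \<le> c then 1 else 2 ^ (m - c - 1)) = (2::nat) ^ (m - a)"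
proof (induction a rule: inc_induct)
  case (step a)
  have "(\<Sum>c=a..m. if m \<le> c then 1 else 2 ^ (m - c - 1)) =
      (if m \<le> a then 1 else 2 ^ (m - a - 1)) + (\<Sum>c=Suc a..m. if m \<le> c then 1 else (2::nat) ^ (m - c - 1))"
    using step.hyps by (intro sum.atLeast_Suc_atMost) simp
  also have "\<dots> = 2 ^ (m - a - 1) + 2 ^ (m - Suc a)"
    using step.hyps step.IH by simp
  also have "\<dots> = 2 ^ (m - a)"
    using step.hyps by (cases "m - a") auto
  finally show ?case .
qed simp

lemma card_left_parts: "card (left_parts a b) = (if b \<le> a then 1 else 2 ^ (b - a - 1))"
proof (induction b arbitrary: a)
  case 0
  then show ?case
    by (simp add: left_parts_empty)
next
  case (Suc m)
  show ?case
  proof (cases "a \<le> m")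
    case True
    have "card (left_parts a (Suc m)) = (\<Sum>c\<in>{a..m}. card (left_parts c m) * card {[a..<c]})"
      unfolding left_parts_Suc[OF True]
      by (rule card_UN_append_Cons[where p = a]) (auto simp: finite_left_parts dest: set_left_parts)
    also have "\<dots> = (\<Sum>c=a..m. if m \<le> c then 1 else 2 ^ (m - c - 1))"
      by (intro sum.cong refl) (simp only: Suc.IH card.empty card_insert_disjoint finite.emptyI
          empty_iff not_False_eq_True mult_1_right)
    also have "\<dots> = 2 ^ (m - a)"
      by (rule sum_pow2_interval[OF True])
    finally show ?thesis
      using True by simp
  next
    case False
    then show ?thesis
      by (simp add: left_parts_empty)
  qed
qed

lemma card_right_parts: "card (right_parts a b) = catalan (b - a)"
proof (induction "b - a" arbitrary: a b rule: less_induct)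
  case less
  show ?case
  proof (cases "a < b")
    case True
    have "card (right_parts a b) = (\<Sum>c\<in>{Suc a..b}. card (right_parts c b) * card (right_parts (Suc a) c))"
      unfolding right_parts_Suc[OF True]
      by (rule card_UN_append_Cons[where p = "Suc a"])
        (auto simp: finite_right_parts dest: set_right_parts length_right_parts)
    also have "\<dots> = (\<Sum>c\<in>{Suc a..b}. catalan (b - c) * catalan (c - Suc a))"
    proof (rule sum.cong)
      fix c
      assume "c \<in> {Suc a..b}"
      then have "b - c < b - a" "c - Suc a < b - a"
        by auto
      then show "card (right_parts c b) * card (right_parts (Suc a) c) = catalan (b - c) * catalan (c - Suc a)"
        using less.hyps by simp
    qed simp
    also have "\<dots> = catalan (b - a)"
      by (rule catalan_Suc_interval[OF True])
    finally show ?thesis .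
  next
    case False
    then show ?thesis
      by (simp add: right_parts_empty catalan_def)
  qed
qed

theorem mainTheorem13:
  fixes n :: nat
  assumes "n \<ge> 1"
  shows "card (Sort_n [1,2,3] {0} n) =
           catalan (n - 1) + (\<Sum>i<n - 1. 2 ^ (n - 2 - i) * catalan i)"
proof -
  obtain m where n: "n = Suc m"
    using assms by (cases n) auto
  have "card (Sort_n [1,2,3] {0} n) = (\<Sum>c\<in>{1..n}. card (left_parts c n) * card (right_parts 1 c))"
    unfolding Sort_n_12_3_eq[OF assms]
    by (rule card_UN_append_Cons[where p = 1])
      (auto simp: finite_left_parts finite_right_parts dest: set_left_parts set_right_parts length_right_parts)
  also have "\<dots> = (\<Sum>c = 1..m. 2 ^ (m - c) * catalan (c - 1)) + catalan m"
    unfolding n card_left_parts card_right_parts by simp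
  also have "(\<Sum>c = 1..m. 2 ^ (m - c) * catalan (c - 1)) = (\<Sum>i<m. 2 ^ (m - Suc i) * catalan i)"
    by (simp add: sum.atLeast1_atMost_eq)
  finally show ?thesis
    by (simp add: n)
qed

end
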